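(* Let $(R,\mathfrak{m})$ be a finite commutative local ring with identity whose maximal ideal $\mathfrak{m}$ is a principal ideal, and let $I$ be an ideal of $R$. Then $\Gamma''_I(R)$ is a planar graph.
   Context: For a commutative ring $R$ and an ideal $I$ of $R$, $\Gamma''_I(R)$ is the simple undirected graph whose vertex set is $\{x\in R\setminus I : xR+I\neq R\}$, and two distinct vertices $x,y$ are adjacent if and only if $x\notin yR+I$ and $y\notin xR+I$. A graph is planar if it can be drawn in the plane with edges meeting only at their endpoints. *)

theory Defs
  imports "HOL-Algebra.Algebra" "HOL-Analysis.Analysis"
begin

definition local_ring :: "('a, 'b) ring_scheme \<Rightarrow> bool" where
  "local_ring R \<longleftrightarrow> cring R \<and> (\<exists>!m. maximalideal m R)"

definition gamma2_vertices :: "('a, 'b) ring_scheme \<Rightarrow> 'a set \<Rightarrow> 'a set" where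
  "gamma2_vertices R I =
     {x \<in> carrier R - I. (PIdl\<^bsub>R\<^esub> x) <+>\<^bsub>R\<^esub> I \<noteq> carrier R}"

definition gamma2_edges :: "('a, 'b) ring_scheme \<Rightarrow> 'a set \<Rightarrow> 'a set set" where
  "gamma2_edges R I =
     {{x, y} | x y. x \<in> gamma2_vertices R I \<and> y \<in> gamma2_vertices R I \<and> x \<noteq> y \<and>
        x \<notin> (PIdl\<^bsub>R\<^esub> y) <+>\<^bsub>R\<^esub> I \<and> y \<notin> (PIdl\<^bsub>R\<^esub> x) <+>\<^bsub>R\<^esub> I}"

definition planar_graph :: "'v set \<Rightarrow> 'v set set \<Rightarrow> bool" where
  "planar_graph V E \<longleftrightarrow>
     (\<exists>(f :: 'v \<Rightarrow> complex) (g :: 'v set \<Rightarrow> real \<Rightarrow> complex).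
        inj_on f V \<and>
        (\<forall>e\<in>E. arc (g e) \<and> {pathstart (g e), pathfinish (g e)} = f ` e \<and>
                 path_image (g e) \<inter> f ` V = f ` e) \<and>
        (\<forall>e\<in>E. \<forall>e'\<in>E. e \<noteq> e' \<longrightarrow> path_image (g e) \<inter> path_image (g e') = f ` (e \<inter> e')))"

end

theory Submission
  imports Defs
begin

text \<open>A finite local ring whose maximal ideal is generated by \<open>a\<close> is a chain ring: by Nakayama's
  lemma, every nonzero element is a unit times a power of \<open>a\<close>, so divisibility is a total
  preorder. Hence for any \<open>x, y\<close> one of \<open>x \<in> yR + I\<close>, \<open>y \<in> xR + I\<close> holds, so
  \<open>\<Gamma>''\<^sub>I(R)\<close> has no edges at all, and a finite edgeless graph is planar.\<close>

context cring
begin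

lemma finite_exists_maximalideal_superset:
  assumes fin: "finite (carrier R)" and K: "ideal K R" and K_proper: "K \<noteq> carrier R"
  shows "\<exists>M. maximalideal M R \<and> K \<subseteq> M"
proof -
  define P where "P = {J. ideal J R \<and> K \<subseteq> J \<and> J \<noteq> carrier R}"
  have "finite P"
    by (rule finite_subset[of _ "Pow (carrier R)"]) (auto simp: P_def fin ideal.Icarr)
  moreover have "K \<in> P"
    using K K_proper by (simp add: P_def)
  ultimately obtain M where M: "M \<in> P" and M_max: "\<And>J. J \<in> P \<Longrightarrow> M \<subseteq> J \<Longrightarrow> M = J"
    using finite_has_maximal2 by metis
  have "maximalideal M R"
  proof (rule maximalidealI)
    fix J assume "ideal J R" "M \<subseteq> J" "J \<subseteq> carrier R"
    then show "J = M \<or> J = carrier R"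
      using M M_max[of J] by (auto simp: P_def)
  qed (use M P_def in auto)
  then show ?thesis
    using M by (auto simp: P_def)
qed

lemma finite_local_notin_maximalideal_Units:
  assumes fin: "finite (carrier R)"
    and unique: "\<And>M. maximalideal M R \<Longrightarrow> M = m"
    and z: "z \<in> carrier R" "z \<notin> m"
  shows "z \<in> Units R"
proof (rule ccontr)
  assume z_nonunit: "z \<notin> Units R"
  have "PIdl z \<noteq> carrier R"
  proof
    assume "PIdl z = carrier R"
    then have "\<one> \<in> PIdl z" by simp
    then obtain y where y: "y \<in> carrier R" "y \<otimes> z = \<one>"
      unfolding cgenideal_def by force
    moreover have "z \<otimes> y = \<one>" using y z(1) by (simp add: m_comm)
    ultimately have "z \<in> Units R"
      unfolding Units_def using z(1) by blast
    with z_nonunit show False ..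
  qed
  then obtain M where "maximalideal M R" "PIdl z \<subseteq> M"
    using finite_exists_maximalideal_superset[OF fin cgenideal_ideal[OF z(1)]] by blast
  then show False
    using unique cgenideal_self[OF z(1)] z(2) by blast
qed

lemma finite_local_one_minus_Units:
  assumes fin: "finite (carrier R)"
    and m: "maximalideal m R" and unique: "\<And>M. maximalideal M R \<Longrightarrow> M = m"
    and r: "r \<in> m"
  shows "\<one> \<ominus> r \<in> Units R"
proof -
  interpret maximalideal m R by (rule m)
  have r_carr: "r \<in> carrier R" using r by (rule Icarr)
  have "\<one> \<ominus> r \<notin> m"
  proof
    assume "\<one> \<ominus> r \<in> m"
    then have "(\<one> \<ominus> r) \<oplus> r \<in> m" using r by (rule a_closed)
    moreover have "(\<one> \<ominus> r) \<oplus> r = \<one>" using r_carr by algebra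
    ultimately show False
      using I_notcarr one_imp_carrier by simp
  qed
  then show ?thesis
    using r_carr by (intro finite_local_notin_maximalideal_Units[OF fin unique]) simp_all
qed

text \<open>The hypothesis on \<open>a\<close> says that \<open>a\<close> lies in the Jacobson radical; this is Nakayama's
  lemma for the cyclic module \<open>xR\<close>.\<close>

lemma self_notin_cgenideal_mult:
  assumes a: "a \<in> carrier R" and jacobson: "\<And>r. r \<in> carrier R \<Longrightarrow> \<one> \<ominus> r \<otimes> a \<in> Units R"
    and x: "x \<in> carrier R" "x \<noteq> \<zero>"
  shows "x \<notin> PIdl (x \<otimes> a)"
proof
  assume "x \<in> PIdl (x \<otimes> a)"
  then obtain r where r: "r \<in> carrier R" "x = r \<otimes> (x \<otimes> a)"
    unfolding cgenideal_def by blast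
  have unit: "\<one> \<ominus> r \<otimes> a \<in> Units R"
    using jacobson[OF r(1)] .
  have "x = (x \<otimes> (\<one> \<ominus> r \<otimes> a)) \<otimes> inv (\<one> \<ominus> r \<otimes> a)"
    using unit x(1) by (simp add: m_assoc Units_r_inv Units_closed)
  also have "x \<otimes> (\<one> \<ominus> r \<otimes> a) = \<zero>"
    using r x(1) a by algebra
  finally have "x = \<zero>"
    using unit by simp
  with x(2) show False ..
qed

lemma finite_local_principal_unit_pow:
  assumes fin: "finite (carrier R)"
    and m: "maximalideal m R" and unique: "\<And>M. maximalideal M R \<Longrightarrow> M = m"
    and a: "a \<in> carrier R" and m_eq: "m = PIdl a"
  shows "x \<in> carrier R \<Longrightarrow> x \<noteq> \<zero> \<Longrightarrow> \<exists>u n. u \<in> Units R \<and> x = u \<otimes> a [^] (n::nat)"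
proof (induction "card (carrier R) - card (PIdl x)" arbitrary: x rule: less_induct)
  case less
  show ?case
  proof (cases "x \<in> m")
    case False
    then have "x \<in> Units R"
      using finite_local_notin_maximalideal_Units[OF fin unique] less.prems(1) by blast
    then show ?thesis
      by (intro exI[of _ x] exI[of _ 0]) (simp add: Units_closed)
  next
    case True
    then obtain y where y: "y \<in> carrier R" "x = y \<otimes> a"
      using m_eq unfolding cgenideal_def by blast
    have "y \<noteq> \<zero>"
    proof
      assume "y = \<zero>"
      then have "x = \<zero>" using y(2) a by simp
      with less.prems(2) show False ..
    qed
    have PIdl_y_carr: "PIdl y \<subseteq> carrier R"
      using y(1) by (simp add: cgenideal_eq_rcos r_coset_subset_G)
    have "PIdl x \<subset> PIdl y"
    proof
      have "x = a \<otimes> y" using y a by (simp add: m_comm)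
      then have "x \<in> PIdl y" using a unfolding cgenideal_def by blast
      then show "PIdl x \<subseteq> PIdl y" by (rule cgenideal_minimal[OF cgenideal_ideal[OF y(1)]])
      have "r \<otimes> a \<in> m" if "r \<in> carrier R" for r
        using m_eq that unfolding cgenideal_def by blast
      then have "y \<notin> PIdl (y \<otimes> a)"
        by (intro self_notin_cgenideal_mult a y(1) \<open>y \<noteq> \<zero>\<close>
            finite_local_one_minus_Units[OF fin m unique])
      then have "y \<notin> PIdl x"
        using y(2) by simp
      then show "PIdl x \<noteq> PIdl y" using cgenideal_self[OF y(1)] by blast
    qed
    moreover have "finite (PIdl y)"
      using PIdl_y_carr fin by (rule finite_subset)
    ultimately have "card (PIdl x) < card (PIdl y)"
      by (simp add: psubset_card_mono)
    moreover have "card (PIdl y) \<le> card (carrier R)"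
      using fin PIdl_y_carr by (rule card_mono)
    ultimately have "card (carrier R) - card (PIdl y) < card (carrier R) - card (PIdl x)"
      by linarith
    from less.hyps[OF this y(1) \<open>y \<noteq> \<zero>\<close>]
    obtain u and n :: nat where "u \<in> Units R" "y = u \<otimes> a [^] n"
      by blast
    then show ?thesis
      using y a by (intro exI[of _ u] exI[of _ "Suc n"]) (simp add: m_assoc Units_closed)
  qed
qed

lemma finite_local_principal_cgenideal_total:
  assumes fin: "finite (carrier R)"
    and m: "maximalideal m R" and unique: "\<And>M. maximalideal M R \<Longrightarrow> M = m"
    and a: "a \<in> carrier R" and m_eq: "m = PIdl a"
    and x: "x \<in> carrier R" and y: "y \<in> carrier R"
  shows "x \<in> PIdl y \<or> y \<in> PIdl x"
proof -
  have divides: "v \<otimes> a [^] k \<in> PIdl (u \<otimes> a [^] n)"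
    if "u \<in> Units R" "v \<in> Units R" "n \<le> k" for u v and n k :: nat
  proof -
    have carr: "u \<in> carrier R" "inv u \<in> carrier R" "v \<in> carrier R"
      "a [^] (k - n) \<in> carrier R" "a [^] n \<in> carrier R"
      using that a by (simp_all add: Units_closed)
    have "(v \<otimes> inv u \<otimes> a [^] (k - n)) \<otimes> (u \<otimes> a [^] n)
        = v \<otimes> (inv u \<otimes> u) \<otimes> (a [^] (k - n) \<otimes> a [^] n)"
      using carr by algebra
    also have "\<dots> = v \<otimes> a [^] k"
      using that a by (simp add: nat_pow_mult Units_closed)
    finally have "v \<otimes> a [^] k = (v \<otimes> inv u \<otimes> a [^] (k - n)) \<otimes> (u \<otimes> a [^] n)" ..
    then show ?thesis
      using that a unfolding cgenideal_def by blast
  qed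
  have zero_in: "\<zero> \<in> PIdl z" if "z \<in> carrier R" for z
    using additive_subgroup.zero_closed[OF ideal.axioms(1)[OF cgenideal_ideal[OF that]]] .
  show ?thesis
  proof (cases "x = \<zero> \<or> y = \<zero>")
    case True
    then show ?thesis
      using zero_in x y by blast
  next
    case False
    obtain u and n :: nat where u: "u \<in> Units R" "x = u \<otimes> a [^] n"
      using finite_local_principal_unit_pow[OF fin m unique a m_eq x] False by blast
    obtain v and k :: nat where v: "v \<in> Units R" "y = v \<otimes> a [^] k"
      using finite_local_principal_unit_pow[OF fin m unique a m_eq y] False by blast
    show ?thesis
    proof (cases "n \<le> k")
      case True
      then show ?thesis using divides[OF u(1) v(1)] u(2) v(2) by simp
    next
      case False
      then show ?thesis using divides[OF v(1) u(1)] u(2) v(2) by simp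
    qed
  qed
qed

lemma gamma2_edges_eq_empty_if_cgenideal_total:
  assumes I: "ideal I R"
    and total: "\<And>x y. x \<in> carrier R \<Longrightarrow> y \<in> carrier R \<Longrightarrow> x \<in> PIdl y \<or> y \<in> PIdl x"
  shows "gamma2_edges R I = {}"
proof -
  have "PIdl y \<subseteq> PIdl y <+> I" if "y \<in> carrier R" for y
    using genideal_self[of "PIdl y \<union> I"] union_genideal[OF cgenideal_ideal[OF that] I]
      ideal.Icarr[OF cgenideal_ideal[OF that]] ideal.Icarr[OF I] by blast
  then show ?thesis
    using total unfolding gamma2_edges_def gamma2_vertices_def by blast
qed

lemma finite_local_principal_gamma2_edges_empty:
  assumes fin: "finite (carrier R)"
    and local: "\<exists>!m. maximalideal m R"
    and principal: "\<And>m. maximalideal m R \<Longrightarrow> principalideal m R"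
    and I: "ideal I R"
  shows "gamma2_edges R I = {}"
proof -
  obtain m where m: "maximalideal m R" and unique: "\<And>M. maximalideal M R \<Longrightarrow> M = m"
    using local by blast
  obtain a where a: "a \<in> carrier R" and m_eq: "m = PIdl a"
    using principalideal.generate[OF principal[OF m]] cgenideal_eq_genideal by metis
  show ?thesis
    using gamma2_edges_eq_empty_if_cgenideal_total[OF I]
      finite_local_principal_cgenideal_total[OF fin m unique a m_eq] by blast
qed

end

lemma planar_graph_no_edges:
  assumes "finite V"
  shows "planar_graph V {}"
proof -
  obtain h :: "'a \<Rightarrow> nat" where "inj_on h V"
    using finite_imp_inj_to_nat_seg[OF assms] by blast
  then have "inj_on (\<lambda>v. of_nat (h v) :: complex) V"
    by (simp add: inj_on_def)
  then show ?thesis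
    unfolding planar_graph_def by blast
qed

theorem theorem3p10:
  fixes R :: "('a, 'b) ring_scheme" and I :: "'a set"
  assumes "local_ring R"
    and "finite (carrier R)"
    and "\<And>m. maximalideal m R \<Longrightarrow> principalideal m R"
    and "ideal I R"
  shows "planar_graph (gamma2_vertices R I) (gamma2_edges R I)"
proof -
  have cring: "cring R" and local: "\<exists>!m. maximalideal m R"
    using assms(1) by (simp_all add: local_ring_def)
  have "gamma2_edges R I = {}"
    by (rule cring.finite_local_principal_gamma2_edges_empty[OF cring assms(2) local assms(3,4)])
  moreover have "finite (gamma2_vertices R I)"
    by (rule finite_subset[OF _ assms(2)]) (auto simp: gamma2_vertices_def)
  ultimately show ?thesis
    by (simp add: planar_graph_no_edges)
qed

end
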